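(* Let $(X,Y)\sim\mathcal D$ with $Y\in[0,1]^d$, $f:\mathcal X\to[0,1]^d$ a forecaster, $\mathcal A$ a finite action set and $u(a,p)=r_a\cdot p+c_a$ with $r_a\in\mathbb R^d$, $c_a\in\mathbb R$; let $\mathrm{val}(p)=\max_{a\in\mathcal A}u(a,p)$ and $L:=\max_{a}\|r_a\|_2$. Let $\{B_j\}_{j=1}^J$ be a measurable partition of $[0,1]^d$, write $E_j=\{f(X)\in B_j\}$, $P_j=\mathbb P(E_j)>0$, $m_j=\mathbb E[f(X)\mid E_j]$. For $\varepsilon\ge0$ let $$\mathcal Q_\varepsilon=\Big\{q:[0,1]^d\to[0,1]^d:\ \big\|\mathbb E[\mathbf 1_{\{f(X)\in B_j\}}\{q(f(X))-f(X)\}]\big\|_2\le\varepsilon,\ j=1,\ldots,J\Big\}.$$ Then $$\sum_{j=1}^J P_j\,\mathrm{val}(m_j)-JL\varepsilon\ \le\ \min_{q\in\mathcal Q_\varepsilon}\mathbb E\big[\mathrm{val}(q(f(X)))\big]\ \le\ \sum_{j=1}^J P_j\,\mathrm{val}(m_j).$$ Moreover, there exists a worst-case (or arbitrarily near-worst-case) belief that is piecewise constant: for each $j$ one can take $q^\star_\varepsilon(v)=p_j^\star$ for $v\in B_j$ (a.e.), with $$p_j^\star\in\arg\min\{\mathrm{val}(p): p\in[0,1]^d,\ \|p-m_j\|_2\le\varepsilon/P_j\},$$ and the robust action on $B_j$ best-responds to $p_j^\star$, i.e. lies in $\arg\max_{a\in\mathcal A}u(a,p_j^\star)$.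
   Context: "a.e." refers to the distribution of $f(X)$. Bins with $P_j=0$ are ignorable and are excluded. *)

theory Defs
  imports "HOL-Probability.Probability"
begin

text \<open>The unit cube [0,1]^d, with d encoded as a finite index type.\<close>
definition unit_cube :: "(real ^ 'd) set" where
  "unit_cube = {p. \<forall>i. 0 \<le> p $ i \<and> p $ i \<le> 1}"

definition util :: "('b \<Rightarrow> real ^ 'd) \<Rightarrow> ('b \<Rightarrow> real) \<Rightarrow> 'b \<Rightarrow> real ^ 'd \<Rightarrow> real" where
  "util r c a p = r a \<bullet> p + c a"

definition val :: "'b set \<Rightarrow> ('b \<Rightarrow> real ^ 'd) \<Rightarrow> ('b \<Rightarrow> real) \<Rightarrow> real ^ 'd \<Rightarrow> real" where
  "val A r c p = Max ((\<lambda>a. util r c a p) ` A)"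

definition lip_const :: "'b set \<Rightarrow> ('b \<Rightarrow> real ^ 'd) \<Rightarrow> real" where
  "lip_const A r = Max ((\<lambda>a. norm (r a)) ` A)"

definition best_resp :: "'b set \<Rightarrow> ('b \<Rightarrow> real ^ 'd) \<Rightarrow> ('b \<Rightarrow> real) \<Rightarrow> real ^ 'd \<Rightarrow> 'b set" where
  "best_resp A r c p = {a \<in> A. \<forall>b \<in> A. util r c b p \<le> util r c a p}"

definition bin_prob :: "'a measure \<Rightarrow> ('a \<Rightarrow> 'x) \<Rightarrow> ('x \<Rightarrow> real ^ 'd) \<Rightarrow> (real ^ 'd) set \<Rightarrow> real" where
  "bin_prob M X f Bj = measure M {\<omega> \<in> space M. f (X \<omega>) \<in> Bj}"

text \<open>m_j = E[f(X) | E_j] = E[1_{E_j} f(X)] / P_j.\<close>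
definition bin_mean :: "'a measure \<Rightarrow> ('a \<Rightarrow> 'x) \<Rightarrow> ('x \<Rightarrow> real ^ 'd) \<Rightarrow> (real ^ 'd) set \<Rightarrow> real ^ 'd" where
  "bin_mean M X f Bj = (1 / bin_prob M X f Bj) *\<^sub>R
      (\<integral>\<omega>. indicator {\<omega> \<in> space M. f (X \<omega>) \<in> Bj} \<omega> *\<^sub>R f (X \<omega>) \<partial>M)"

definition Q_set :: "'a measure \<Rightarrow> ('a \<Rightarrow> 'x) \<Rightarrow> ('x \<Rightarrow> real ^ 'd) \<Rightarrow> (nat \<Rightarrow> (real ^ 'd) set)
    \<Rightarrow> nat \<Rightarrow> real \<Rightarrow> (real ^ 'd \<Rightarrow> real ^ 'd) set" where
  "Q_set M X f B J \<epsilon> = {q. q \<in> borel_measurable borel \<and> (\<forall>v \<in> unit_cube. q v \<in> unit_cube) \<and>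
      (\<forall>j \<in> {1..J}. norm (\<integral>\<omega>. indicator {\<omega> \<in> space M. f (X \<omega>) \<in> B j} \<omega> *\<^sub>R
                                 (q (f (X \<omega>)) - f (X \<omega>)) \<partial>M) \<le> \<epsilon>)}"

definition exp_val :: "'a measure \<Rightarrow> ('a \<Rightarrow> 'x) \<Rightarrow> ('x \<Rightarrow> real ^ 'd) \<Rightarrow> 'b set \<Rightarrow> ('b \<Rightarrow> real ^ 'd)
    \<Rightarrow> ('b \<Rightarrow> real) \<Rightarrow> (real ^ 'd \<Rightarrow> real ^ 'd) \<Rightarrow> real" where
  "exp_val M X f A r c q = (\<integral>\<omega>. val A r c (q (f (X \<omega>))) \<partial>M)"

definition worst_beliefs :: "'b set \<Rightarrow> ('b \<Rightarrow> real ^ 'd) \<Rightarrow> ('b \<Rightarrow> real) \<Rightarrow> real ^ 'd \<Rightarrow> real \<Rightarrow> (real ^ 'd) set" where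
  "worst_beliefs A r c m \<rho> = {p \<in> unit_cube. norm (p - m) \<le> \<rho> \<and>
      (\<forall>p' \<in> unit_cube. norm (p' - m) \<le> \<rho> \<longrightarrow> val A r c p \<le> val A r c p')}"

end

theory Submission
  imports Defs
begin

text \<open>The value function val is a maximum of affine functions, hence convex and Lipschitz with
  constant L. For an admissible q, Jensen's inequality on the bin E_j bounds
  E[1_{E_j} val(q(f(X)))] from below by P_j val(m'_j), where the conditional mean m'_j of q(f(X))
  on E_j lies in the cube at distance at most \<epsilon>/P_j from m_j; hence
  E[val(q(f(X)))] \<ge> \<Sum>_j P_j val(p*_j). The belief that equals p*_j on B_j is admissible and
  attains this bound, and the Lipschitz bound gives val(m_j) - L \<epsilon>/P_j \<le> val(p*_j) \<le> val(m_j).\<close>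

lemma val_ge_util: "finite A \<Longrightarrow> a \<in> A \<Longrightarrow> util r c a p \<le> val A r c p"
  unfolding val_def by (rule Max_ge) auto

lemma val_attained:
  assumes "finite A" "A \<noteq> {}"
  obtains a where "a \<in> A" "val A r c p = util r c a p"
proof -
  have "val A r c p \<in> (\<lambda>a. util r c a p) ` A"
    unfolding val_def using assms by (intro Max_in) auto
  then show ?thesis using that by blast
qed

lemma norm_le_lip_const: "finite A \<Longrightarrow> a \<in> A \<Longrightarrow> norm (r a) \<le> lip_const A r"
  unfolding lip_const_def by (rule Max_ge) auto

lemma lip_const_nonneg: "finite A \<Longrightarrow> A \<noteq> {} \<Longrightarrow> 0 \<le> lip_const A r"
  using norm_le_lip_const[of A _ r] by (meson ex_in_conv norm_ge_zero order_trans)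

lemma val_minus_lip_le_val:
  assumes "finite A" "A \<noteq> {}"
  shows "val A r c m - lip_const A r * norm (p - m) \<le> val A r c p"
proof -
  obtain a where a: "a \<in> A" "val A r c m = util r c a m"
    using val_attained[OF assms] .
  have "- (r a \<bullet> (p - m)) \<le> norm (r a) * norm (p - m)"
    using Cauchy_Schwarz_ineq2[of "r a" "p - m"] by linarith
  also have "\<dots> \<le> lip_const A r * norm (p - m)"
    by (rule mult_right_mono) (simp_all add: norm_le_lip_const[OF assms(1) a(1)])
  finally have "util r c a m - lip_const A r * norm (p - m) \<le> util r c a p"
    by (simp add: util_def inner_diff_right)
  then show ?thesis
    using a val_ge_util[OF assms(1) a(1), of r c p] by linarith
qed

lemma lipschitz_on_val:
  assumes "finite A" "A \<noteq> {}"
  shows "(lip_const A r)-lipschitz_on S (val A r c)"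
proof (rule lipschitz_onI)
  fix x y
  show "dist (val A r c x) (val A r c y) \<le> lip_const A r * dist x y"
    using val_minus_lip_le_val[OF assms, of r c x y] val_minus_lip_le_val[OF assms, of r c y x]
    by (simp add: dist_norm norm_minus_commute abs_le_iff)
qed (rule lip_const_nonneg[OF assms])

lemma continuous_on_val: "finite A \<Longrightarrow> A \<noteq> {} \<Longrightarrow> continuous_on S (val A r c)"
  by (rule lipschitz_on_continuous_on[OF lipschitz_on_val])

lemma borel_measurable_val: "finite A \<Longrightarrow> A \<noteq> {} \<Longrightarrow> val A r c \<in> borel_measurable borel"
  by (rule borel_measurable_continuous_onI[OF continuous_on_val])

lemma unit_cube_eq_cbox: "unit_cube = cbox 0 (1 :: real ^ 'd)"
  unfolding unit_cube_def by (auto simp: mem_box_cart)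

lemma compact_unit_cube: "compact (unit_cube :: (real ^ 'd) set)"
  by (simp add: unit_cube_eq_cbox)

lemma (in finite_measure) integrable_bounded_range:
  fixes h :: "'a \<Rightarrow> 'b::{banach, second_countable_topology}"
  assumes "h \<in> borel_measurable M" "bounded (h ` space M)"
  shows "integrable M h"
proof -
  obtain K where "\<forall>y \<in> h ` space M. norm y \<le> K"
    using assms(2) bounded_iff by blast
  then show ?thesis
    by (intro integrable_const_bound[where B = K] assms(1)) auto
qed

lemma (in finite_measure) integrable_unit_cube_valued:
  fixes h :: "'a \<Rightarrow> real ^ 'd"
  assumes "h \<in> borel_measurable M" "\<forall>\<omega> \<in> space M. h \<omega> \<in> unit_cube"
  shows "integrable M h"
proof (rule integrable_bounded_range[OF assms(1)])
  show "bounded (h ` space M)"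
    using assms(2) compact_imp_bounded[OF compact_unit_cube] by (blast intro: bounded_subset)
qed

lemma (in finite_measure) integrable_val_unit_cube_valued:
  fixes h :: "'a \<Rightarrow> real ^ 'd"
  assumes "finite A" "A \<noteq> {}" "h \<in> borel_measurable M" "\<forall>\<omega> \<in> space M. h \<omega> \<in> unit_cube"
  shows "integrable M (\<lambda>\<omega>. val A r c (h \<omega>))"
proof (rule integrable_bounded_range)
  show "(\<lambda>\<omega>. val A r c (h \<omega>)) \<in> borel_measurable M"
    using borel_measurable_val[OF assms(1,2)] assms(3) by measurable
  have "bounded (val A r c ` unit_cube)"
    by (intro compact_imp_bounded compact_continuous_image continuous_on_val assms(1,2)
        compact_unit_cube)
  then show "bounded ((\<lambda>\<omega>. val A r c (h \<omega>)) ` space M)"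
    using assms(4) by (blast intro: bounded_subset)
qed

lemma (in finite_measure) indicator_mean_in_unit_cube:
  fixes h :: "'a \<Rightarrow> real ^ 'd"
  assumes "h \<in> borel_measurable M" "\<forall>\<omega> \<in> space M. h \<omega> \<in> unit_cube"
    and "E \<in> sets M" "measure M E > 0"
  shows "(1 / measure M E) *\<^sub>R (\<integral>\<omega>. indicator E \<omega> *\<^sub>R h \<omega> \<partial>M) \<in> unit_cube"
proof -
  have int: "integrable M (\<lambda>\<omega>. indicator E \<omega> *\<^sub>R h \<omega>)"
    using integrable_mult_indicator[OF assms(3) integrable_unit_cube_valued[OF assms(1,2)]] .
  have "0 \<le> (\<integral>\<omega>. indicator E \<omega> *\<^sub>R h \<omega> \<partial>M) $ i
        \<and> (\<integral>\<omega>. indicator E \<omega> *\<^sub>R h \<omega> \<partial>M) $ i \<le> measure M E" for i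
  proof -
    have component: "(\<integral>\<omega>. indicator E \<omega> *\<^sub>R h \<omega> \<partial>M) $ i = (\<integral>\<omega>. indicator E \<omega> * h \<omega> $ i \<partial>M)"
      using integral_inner_left[OF int, of "axis i 1"] by (simp add: inner_axis)
    have int_i: "integrable M (\<lambda>\<omega>. indicator E \<omega> * h \<omega> $ i)"
      using integrable_inner_left[OF int, of "axis i 1"] by (simp add: inner_axis)
    have "0 \<le> (\<integral>\<omega>. indicator E \<omega> * h \<omega> $ i \<partial>M)"
      using assms(2) by (intro integral_nonneg_AE AE_I2) (auto simp: unit_cube_def indicator_def)
    moreover have "(\<integral>\<omega>. indicator E \<omega> * h \<omega> $ i \<partial>M) \<le> (\<integral>\<omega>. indicator E \<omega> \<partial>M)"
      using assms(2,3)
      by (intro integral_mono int_i integrable_real_indicator)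
        (auto simp: unit_cube_def indicator_def less_top[symmetric])
    ultimately show ?thesis
      using component assms(3) by (simp add: Int_absorb2 sets.sets_into_space)
  qed
  then show ?thesis
    using assms(4) by (auto simp: unit_cube_def divide_simps)
qed

lemma (in finite_measure) val_indicator_mean_le:
  fixes h :: "'a \<Rightarrow> real ^ 'd"
  assumes "finite A" "A \<noteq> {}" "integrable M h" "integrable M (\<lambda>\<omega>. val A r c (h \<omega>))"
    and "E \<in> sets M" "measure M E > 0"
  shows "measure M E * val A r c ((1 / measure M E) *\<^sub>R (\<integral>\<omega>. indicator E \<omega> *\<^sub>R h \<omega> \<partial>M))
    \<le> (\<integral>\<omega>. indicator E \<omega> * val A r c (h \<omega>) \<partial>M)"
proof -
  define P where "P = measure M E"
  define S where "S = (\<integral>\<omega>. indicator E \<omega> *\<^sub>R h \<omega> \<partial>M)"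
  \<comment> \<open>The affine piece that is active at the mean minorizes val everywhere.\<close>
  obtain a where a: "a \<in> A" "val A r c ((1 / P) *\<^sub>R S) = util r c a ((1 / P) *\<^sub>R S)"
    using val_attained[OF assms(1,2)] .
  have int_Eh: "integrable M (\<lambda>\<omega>. indicator E \<omega> *\<^sub>R h \<omega>)"
    by (rule integrable_mult_indicator[OF assms(5,3)])
  have int_E: "integrable M (\<lambda>\<omega>. c a * indicator E \<omega>)"
    using assms(5) by (auto simp: less_top[symmetric])
  have "P * val A r c ((1 / P) *\<^sub>R S) = r a \<bullet> S + c a * P"
    using a(2) assms(6) by (simp add: P_def util_def field_simps)
  also have "\<dots> = (\<integral>\<omega>. r a \<bullet> (indicator E \<omega> *\<^sub>R h \<omega>) + c a * indicator E \<omega> \<partial>M)"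
  proof -
    have "(\<integral>\<omega>. r a \<bullet> (indicator E \<omega> *\<^sub>R h \<omega>) \<partial>M) = r a \<bullet> S"
      unfolding S_def by (rule integral_inner_right[OF int_Eh])
    moreover have "(\<integral>\<omega>. c a * indicator E \<omega> \<partial>M) = c a * P"
      using assms(5) by (simp add: P_def Int_absorb2 sets.sets_into_space)
    ultimately show ?thesis
      by (simp only: Bochner_Integration.integral_add[OF integrable_inner_right[OF int_Eh] int_E])
  qed
  also have "\<dots> \<le> (\<integral>\<omega>. indicator E \<omega> * val A r c (h \<omega>) \<partial>M)"
  proof (rule integral_mono)
    show "integrable M (\<lambda>\<omega>. r a \<bullet> (indicator E \<omega> *\<^sub>R h \<omega>) + c a * indicator E \<omega>)"
      using int_Eh int_E by (intro Bochner_Integration.integrable_add integrable_inner_right)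
    show "integrable M (\<lambda>\<omega>. indicator E \<omega> * val A r c (h \<omega>))"
      using integrable_mult_indicator[OF assms(5,4)] by simp
    show "r a \<bullet> (indicator E \<omega> *\<^sub>R h \<omega>) + c a * indicator E \<omega> \<le> indicator E \<omega> * val A r c (h \<omega>)"
      for \<omega>
      using val_ge_util[OF assms(1) a(1), of r c "h \<omega>"] by (auto simp: indicator_def util_def)
  qed
  finally show ?thesis
    by (simp add: P_def S_def)
qed

lemma integral_eq_sum_indicator_partition:
  fixes F :: "'a \<Rightarrow> real"
  assumes "integrable M F" "finite I" "disjoint_family_on E I" "\<forall>i \<in> I. E i \<in> sets M"
    and "space M \<subseteq> (\<Union>i \<in> I. E i)"
  shows "(\<integral>\<omega>. F \<omega> \<partial>M) = (\<Sum>i \<in> I. \<integral>\<omega>. indicator (E i) \<omega> * F \<omega> \<partial>M)"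
proof -
  have "(\<integral>\<omega>. F \<omega> \<partial>M) = (\<integral>\<omega>. (\<Sum>i \<in> I. indicator (E i) \<omega> * F \<omega>) \<partial>M)"
  proof (rule Bochner_Integration.integral_cong[OF refl])
    fix \<omega> assume "\<omega> \<in> space M"
    then obtain j where "j \<in> I" "\<omega> \<in> E j"
      using assms(5) by blast
    then show "F \<omega> = (\<Sum>i \<in> I. indicator (E i) \<omega> * F \<omega>)"
      using sum_indicator_disjoint_family[OF assms(3), of \<omega> j "\<lambda>_. F \<omega>"] assms(2)
      by (simp add: mult.commute)
  qed
  also have "\<dots> = (\<Sum>i \<in> I. \<integral>\<omega>. indicator (E i) \<omega> * F \<omega> \<partial>M)"
    using assms(1,4)
    by (intro Bochner_Integration.integral_sum) (auto simp: mult.commute intro: integrable_real_mult_indicator)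
  finally show ?thesis .
qed

lemma worst_beliefs_nonempty:
  assumes "finite A" "A \<noteq> {}" "m \<in> unit_cube" "\<rho> \<ge> 0"
  shows "worst_beliefs A r c m \<rho> \<noteq> {}"
proof -
  have "compact (unit_cube \<inter> cball m \<rho>)"
    by (intro compact_Int_closed compact_unit_cube closed_cball)
  moreover have "unit_cube \<inter> cball m \<rho> \<noteq> {}"
    using assms(3,4) by auto
  ultimately obtain p where "p \<in> unit_cube \<inter> cball m \<rho>"
      "\<forall>p' \<in> unit_cube \<inter> cball m \<rho>. val A r c p \<le> val A r c p'"
    using continuous_attains_inf[OF _ _ continuous_on_val[OF assms(1,2)]] by blast
  then have "p \<in> worst_beliefs A r c m \<rho>"
    unfolding worst_beliefs_def by (auto simp: dist_norm norm_minus_commute)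
  then show ?thesis by blast
qed

lemma worst_belief_val_le:
  assumes "p \<in> worst_beliefs A r c m \<rho>" "m \<in> unit_cube" "\<rho> \<ge> 0"
  shows "val A r c p \<le> val A r c m"
  using assms unfolding worst_beliefs_def by auto

lemma worst_belief_val_ge:
  assumes "finite A" "A \<noteq> {}" "p \<in> worst_beliefs A r c m \<rho>"
  shows "val A r c m - lip_const A r * \<rho> \<le> val A r c p"
proof -
  have "lip_const A r * norm (p - m) \<le> lip_const A r * \<rho>"
    using assms(3) lip_const_nonneg[OF assms(1,2)]
    by (intro mult_left_mono) (auto simp: worst_beliefs_def)
  then show ?thesis
    using val_minus_lip_le_val[OF assms(1,2), of r c m p] by linarith
qed

lemma norm_scaleR_le_iff: "0 < a \<Longrightarrow> norm (a *\<^sub>R x) \<le> b \<longleftrightarrow> norm x \<le> b / a"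
  by (simp add: field_simps)

lemma piecewise_constant_borel_function:
  fixes p :: "'i \<Rightarrow> 'b::{real_normed_vector, second_countable_topology}"
    and B :: "'i \<Rightarrow> 'a::topological_space set"
  assumes "finite I" "disjoint_family_on B I" "\<forall>i \<in> I. B i \<in> sets borel"
  obtains g where "g \<in> borel_measurable borel" "\<forall>i \<in> I. \<forall>v \<in> B i. g v = p i"
proof
  show "(\<lambda>v. \<Sum>i \<in> I. indicator (B i) v *\<^sub>R p i) \<in> borel_measurable borel"
    using assms(3) by (intro borel_measurable_sum borel_measurable_scaleR borel_measurable_indicator) auto
  show "\<forall>j \<in> I. \<forall>v \<in> B j. (\<Sum>i \<in> I. indicator (B i) v *\<^sub>R p i) = p j"
  proof (intro ballI)
    fix j v assume j: "j \<in> I" and v: "v \<in> B j"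
    have "indicator (B i) v *\<^sub>R p i = (if i = j then p j else 0)" if "i \<in> I" for i
      using disjoint_family_onD[OF assms(2) that j] v by (auto simp: indicator_def)
    then show "(\<Sum>i \<in> I. indicator (B i) v *\<^sub>R p i) = p j"
      using assms(1) j by (simp add: sum.delta)
  qed
qed

locale binned_forecast = prob_space M
  for M :: "'a measure" +
  fixes SX :: "'x measure" and X :: "'a \<Rightarrow> 'x" and f :: "'x \<Rightarrow> real ^ 'd"
    and A :: "'b set" and r :: "'b \<Rightarrow> real ^ 'd" and c :: "'b \<Rightarrow> real"
    and B :: "nat \<Rightarrow> (real ^ 'd) set" and J :: nat
  assumes X_measurable: "X \<in> measurable M SX"
    and f_measurable: "f \<in> borel_measurable SX"
    and f_in_unit_cube: "\<forall>x \<in> space SX. f x \<in> unit_cube"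
    and finite_actions: "finite A" and actions_nonempty: "A \<noteq> {}"
    and bins_borel: "\<forall>j \<in> {1..J}. B j \<in> sets borel"
    and bins_disjoint: "disjoint_family_on B {1..J}"
    and bins_cover: "(\<Union>j \<in> {1..J}. B j) = unit_cube"
    and bin_prob_pos: "\<forall>j \<in> {1..J}. bin_prob M X f (B j) > 0"
begin

abbreviation bin_event :: "nat \<Rightarrow> 'a set" where
  "bin_event j \<equiv> {\<omega> \<in> space M. f (X \<omega>) \<in> B j}"

abbreviation P :: "nat \<Rightarrow> real" where
  "P j \<equiv> bin_prob M X f (B j)"

abbreviation m :: "nat \<Rightarrow> real ^ 'd" where
  "m j \<equiv> bin_mean M X f (B j)"

abbreviation worst_beliefs_bin :: "real \<Rightarrow> nat \<Rightarrow> (real ^ 'd) set" where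
  "worst_beliefs_bin \<epsilon> j \<equiv> worst_beliefs A r c (m j) (\<epsilon> / P j)"

lemma forecast_measurable: "(\<lambda>\<omega>. f (X \<omega>)) \<in> borel_measurable M"
  by (rule measurable_compose[OF X_measurable f_measurable])

lemma forecast_in_unit_cube: "\<forall>\<omega> \<in> space M. f (X \<omega>) \<in> unit_cube"
  using f_in_unit_cube measurable_space[OF X_measurable] by blast

lemma bin_event_sets: "j \<in> {1..J} \<Longrightarrow> bin_event j \<in> sets M"
  using bins_borel forecast_measurable by measurable

lemma P_pos: "j \<in> {1..J} \<Longrightarrow> P j > 0"
  using bin_prob_pos by blast

lemma P_eq: "P j = measure M (bin_event j)"
  by (simp add: bin_prob_def)

abbreviation bin_avg :: "('a \<Rightarrow> real ^ 'd) \<Rightarrow> nat \<Rightarrow> real ^ 'd" where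
  "bin_avg g j \<equiv> (1 / P j) *\<^sub>R (\<integral>\<omega>. indicator (bin_event j) \<omega> *\<^sub>R g \<omega> \<partial>M)"

lemma m_eq_bin_avg: "m j = bin_avg (\<lambda>\<omega>. f (X \<omega>)) j"
  by (simp add: bin_mean_def)

lemma m_in_unit_cube: "j \<in> {1..J} \<Longrightarrow> m j \<in> unit_cube"
  unfolding m_eq_bin_avg P_eq
  by (intro indicator_mean_in_unit_cube forecast_measurable forecast_in_unit_cube bin_event_sets
      P_pos[unfolded P_eq])

lemma worst_beliefs_bin_nonempty: "\<epsilon> \<ge> 0 \<Longrightarrow> j \<in> {1..J} \<Longrightarrow> worst_beliefs_bin \<epsilon> j \<noteq> {}"
  by (intro worst_beliefs_nonempty finite_actions actions_nonempty m_in_unit_cube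
      divide_nonneg_pos P_pos)

lemma integral_bin_eq_const:
  fixes F :: "'a \<Rightarrow> 'c::{banach, second_countable_topology}"
  assumes "j \<in> {1..J}" "\<forall>\<omega> \<in> bin_event j. F \<omega> = v"
  shows "(\<integral>\<omega>. indicator (bin_event j) \<omega> *\<^sub>R F \<omega> \<partial>M) = P j *\<^sub>R v"
proof -
  have "(\<integral>\<omega>. indicator (bin_event j) \<omega> *\<^sub>R F \<omega> \<partial>M) = (\<integral>\<omega>. indicator (bin_event j) \<omega> *\<^sub>R v \<partial>M)"
    using assms(2) by (intro Bochner_Integration.integral_cong) (auto simp: indicator_def)
  also have "\<dots> = P j *\<^sub>R v"
    using bin_event_sets[OF assms(1)]
    by (simp add: P_eq Int_absorb2 sets.sets_into_space less_top[symmetric])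
  finally show ?thesis .
qed

lemma bin_avg_eq_const:
  assumes "j \<in> {1..J}" "\<forall>\<omega> \<in> bin_event j. g \<omega> = v"
  shows "bin_avg g j = v"
  using integral_bin_eq_const[OF assms] P_pos[OF assms(1)] by simp

lemma bin_shift_eq:
  fixes g :: "'a \<Rightarrow> real ^ 'd"
  assumes "j \<in> {1..J}" "g \<in> borel_measurable M" "\<forall>\<omega> \<in> space M. g \<omega> \<in> unit_cube"
  shows "(\<integral>\<omega>. indicator (bin_event j) \<omega> *\<^sub>R (g \<omega> - f (X \<omega>)) \<partial>M) = P j *\<^sub>R (bin_avg g j - m j)"
proof -
  have "integrable M (\<lambda>\<omega>. indicator (bin_event j) \<omega> *\<^sub>R g \<omega>)"
    "integrable M (\<lambda>\<omega>. indicator (bin_event j) \<omega> *\<^sub>R f (X \<omega>))"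
    using bin_event_sets[OF assms(1)] integrable_unit_cube_valued[OF assms(2,3)]
      integrable_unit_cube_valued[OF forecast_measurable forecast_in_unit_cube]
    by (auto intro: integrable_mult_indicator)
  then have "(\<integral>\<omega>. indicator (bin_event j) \<omega> *\<^sub>R (g \<omega> - f (X \<omega>)) \<partial>M)
      = (\<integral>\<omega>. indicator (bin_event j) \<omega> *\<^sub>R g \<omega> \<partial>M) - (\<integral>\<omega>. indicator (bin_event j) \<omega> *\<^sub>R f (X \<omega>) \<partial>M)"
    by (simp add: scaleR_diff_right)
  then show ?thesis
    using P_pos[OF assms(1)] by (simp add: m_eq_bin_avg scaleR_diff_right)
qed

lemma exp_val_eq_sum_bins:
  assumes "q \<in> borel_measurable borel" "\<forall>v \<in> unit_cube. q v \<in> unit_cube"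
  shows "exp_val M X f A r c q = (\<Sum>j = 1..J. \<integral>\<omega>. indicator (bin_event j) \<omega> * val A r c (q (f (X \<omega>))) \<partial>M)"
  unfolding exp_val_def
proof (rule integral_eq_sum_indicator_partition)
  show "integrable M (\<lambda>\<omega>. val A r c (q (f (X \<omega>))))"
    using assms forecast_measurable forecast_in_unit_cube
    by (intro integrable_val_unit_cube_valued finite_actions actions_nonempty) auto
  show "disjoint_family_on bin_event {1..J}"
    using bins_disjoint by (auto simp: disjoint_family_on_def)
  show "\<forall>j \<in> {1..J}. bin_event j \<in> sets M"
    using bin_event_sets by blast
  show "space M \<subseteq> (\<Union>j \<in> {1..J}. bin_event j)"
    using forecast_in_unit_cube bins_cover by blast
qed simp

lemma bin_integral_val_ge_worst:
  assumes q: "q \<in> Q_set M X f B J \<epsilon>" and j: "j \<in> {1..J}" and p: "p \<in> worst_beliefs_bin \<epsilon> j"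
  shows "P j * val A r c p \<le> (\<integral>\<omega>. indicator (bin_event j) \<omega> * val A r c (q (f (X \<omega>))) \<partial>M)"
proof -
  let ?g = "\<lambda>\<omega>. q (f (X \<omega>))"
  have g_measurable: "?g \<in> borel_measurable M"
    using q forecast_measurable by (auto simp: Q_set_def)
  have g_in_cube: "\<forall>\<omega> \<in> space M. ?g \<omega> \<in> unit_cube"
    using q forecast_in_unit_cube by (auto simp: Q_set_def)
  have avg_in_cube: "bin_avg ?g j \<in> unit_cube"
    using indicator_mean_in_unit_cube[OF g_measurable g_in_cube bin_event_sets[OF j]] P_pos[OF j]
    by (simp add: P_eq)
  have "norm (\<integral>\<omega>. indicator (bin_event j) \<omega> *\<^sub>R (?g \<omega> - f (X \<omega>)) \<partial>M) \<le> \<epsilon>"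
    using q j unfolding Q_set_def by blast
  then have "norm (P j *\<^sub>R (bin_avg ?g j - m j)) \<le> \<epsilon>"
    by (simp only: bin_shift_eq[OF j g_measurable g_in_cube])
  then have "norm (bin_avg ?g j - m j) \<le> \<epsilon> / P j"
    by (simp only: norm_scaleR_le_iff[OF P_pos[OF j]])
  then have "val A r c p \<le> val A r c (bin_avg ?g j)"
    using p avg_in_cube by (auto simp: worst_beliefs_def)
  then have "P j * val A r c p \<le> P j * val A r c (bin_avg ?g j)"
    using P_pos[OF j] by simp
  also have "\<dots> \<le> (\<integral>\<omega>. indicator (bin_event j) \<omega> * val A r c (?g \<omega>) \<partial>M)"
    using val_indicator_mean_le[OF finite_actions actions_nonempty
        integrable_unit_cube_valued[OF g_measurable g_in_cube]
        integrable_val_unit_cube_valued[OF finite_actions actions_nonempty g_measurable g_in_cube]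
        bin_event_sets[OF j]] P_pos[OF j]
    by (simp add: P_eq)
  finally show ?thesis .
qed

lemma exp_val_ge_sum_worst:
  assumes "q \<in> Q_set M X f B J \<epsilon>" "\<forall>j \<in> {1..J}. p j \<in> worst_beliefs_bin \<epsilon> j"
  shows "(\<Sum>j = 1..J. P j * val A r c (p j)) \<le> exp_val M X f A r c q"
proof -
  have "(\<Sum>j = 1..J. P j * val A r c (p j))
      \<le> (\<Sum>j = 1..J. \<integral>\<omega>. indicator (bin_event j) \<omega> * val A r c (q (f (X \<omega>))) \<partial>M)"
    using assms by (intro sum_mono bin_integral_val_ge_worst) auto
  also have "\<dots> = exp_val M X f A r c q"
    using assms(1) by (intro exp_val_eq_sum_bins[symmetric]) (auto simp: Q_set_def)
  finally show ?thesis .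
qed

lemma piecewise_constant_in_unit_cube:
  assumes "\<forall>j \<in> {1..J}. p j \<in> unit_cube" "\<forall>j \<in> {1..J}. \<forall>v \<in> B j. qs v = p j"
  shows "\<forall>v \<in> unit_cube. qs v \<in> unit_cube"
proof
  fix v :: "real ^ 'd"
  assume "v \<in> unit_cube"
  then obtain j where "j \<in> {1..J}" "v \<in> B j"
    using bins_cover by blast
  then show "qs v \<in> unit_cube"
    using assms by simp
qed

lemma piecewise_worst_in_Q:
  assumes p: "\<forall>j \<in> {1..J}. p j \<in> worst_beliefs_bin \<epsilon> j"
    and qs: "qs \<in> borel_measurable borel" "\<forall>j \<in> {1..J}. \<forall>v \<in> B j. qs v = p j"
  shows "qs \<in> Q_set M X f B J \<epsilon>"
proof -
  have qs_cube: "\<forall>v \<in> unit_cube. qs v \<in> unit_cube"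
    using p qs(2) by (intro piecewise_constant_in_unit_cube) (auto simp: worst_beliefs_def)
  have "norm (\<integral>\<omega>. indicator (bin_event j) \<omega> *\<^sub>R (qs (f (X \<omega>)) - f (X \<omega>)) \<partial>M) \<le> \<epsilon>"
    if j: "j \<in> {1..J}" for j
  proof -
    have g_measurable: "(\<lambda>\<omega>. qs (f (X \<omega>))) \<in> borel_measurable M"
      using qs(1) forecast_measurable by measurable
    have g_in_cube: "\<forall>\<omega> \<in> space M. qs (f (X \<omega>)) \<in> unit_cube"
      using qs_cube forecast_in_unit_cube by blast
    have avg: "bin_avg (\<lambda>\<omega>. qs (f (X \<omega>))) j = p j"
      using qs(2) j by (intro bin_avg_eq_const) auto
    have "(\<integral>\<omega>. indicator (bin_event j) \<omega> *\<^sub>R (qs (f (X \<omega>)) - f (X \<omega>)) \<partial>M) = P j *\<^sub>R (p j - m j)"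
      using bin_shift_eq[OF j g_measurable g_in_cube] by (simp only: avg)
    moreover have "norm (p j - m j) \<le> \<epsilon> / P j"
      using p j by (auto simp: worst_beliefs_def)
    ultimately show ?thesis
      by (simp only: norm_scaleR_le_iff[OF P_pos[OF j]])
  qed
  then show ?thesis
    using qs(1) qs_cube by (simp add: Q_set_def)
qed

lemma exp_val_piecewise_constant:
  assumes "\<forall>j \<in> {1..J}. p j \<in> unit_cube"
    and qs: "qs \<in> borel_measurable borel" "\<forall>j \<in> {1..J}. \<forall>v \<in> B j. qs v = p j"
  shows "exp_val M X f A r c qs = (\<Sum>j = 1..J. P j * val A r c (p j))"
proof -
  have "(\<integral>\<omega>. indicator (bin_event j) \<omega> * val A r c (qs (f (X \<omega>))) \<partial>M) = P j * val A r c (p j)"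
    if "j \<in> {1..J}" for j
    using integral_bin_eq_const[OF that, of "\<lambda>\<omega>. val A r c (qs (f (X \<omega>)))"] qs(2) that by simp
  then show ?thesis
    using exp_val_eq_sum_bins[OF qs(1) piecewise_constant_in_unit_cube[OF assms(1) qs(2)]] by simp
qed

lemma piecewise_worst_minimizes:
  assumes p: "\<forall>j \<in> {1..J}. p j \<in> worst_beliefs_bin \<epsilon> j"
    and qs: "qs \<in> borel_measurable borel" "\<forall>j \<in> {1..J}. \<forall>v \<in> B j. qs v = p j"
  shows "qs \<in> Q_set M X f B J \<epsilon>"
    and "\<forall>q \<in> Q_set M X f B J \<epsilon>. exp_val M X f A r c qs \<le> exp_val M X f A r c q"
    and "exp_val M X f A r c qs = (INF q \<in> Q_set M X f B J \<epsilon>. exp_val M X f A r c q)"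
    and "exp_val M X f A r c qs = (\<Sum>j = 1..J. P j * val A r c (p j))"
proof -
  show Q: "qs \<in> Q_set M X f B J \<epsilon>"
    by (rule piecewise_worst_in_Q[OF assms])
  show exp_val_qs: "exp_val M X f A r c qs = (\<Sum>j = 1..J. P j * val A r c (p j))"
    using p qs by (intro exp_val_piecewise_constant) (auto simp: worst_beliefs_def)
  show minimal: "\<forall>q \<in> Q_set M X f B J \<epsilon>. exp_val M X f A r c qs \<le> exp_val M X f A r c q"
    using exp_val_ge_sum_worst[OF _ p] exp_val_qs by simp
  show "exp_val M X f A r c qs = (INF q \<in> Q_set M X f B J \<epsilon>. exp_val M X f A r c q)"
    using Q minimal by (intro cInf_eq_minimum[symmetric]) auto
qed

lemma sum_val_worst_bounds:
  assumes "\<epsilon> \<ge> 0" "\<forall>j \<in> {1..J}. p j \<in> worst_beliefs_bin \<epsilon> j"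
  shows "(\<Sum>j = 1..J. P j * val A r c (m j)) - real J * lip_const A r * \<epsilon>
      \<le> (\<Sum>j = 1..J. P j * val A r c (p j))"
    and "(\<Sum>j = 1..J. P j * val A r c (p j)) \<le> (\<Sum>j = 1..J. P j * val A r c (m j))"
proof -
  have "P j * val A r c (m j) - lip_const A r * \<epsilon> \<le> P j * val A r c (p j)" if j: "j \<in> {1..J}" for j
  proof -
    have "val A r c (m j) - lip_const A r * (\<epsilon> / P j) \<le> val A r c (p j)"
      using assms(2) j by (intro worst_belief_val_ge finite_actions actions_nonempty) auto
    then show ?thesis
      using P_pos[OF j] by (simp add: field_simps)
  qed
  then have "(\<Sum>j = 1..J. P j * val A r c (m j) - lip_const A r * \<epsilon>) \<le> (\<Sum>j = 1..J. P j * val A r c (p j))"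
    by (rule sum_mono)
  then show "(\<Sum>j = 1..J. P j * val A r c (m j)) - real J * lip_const A r * \<epsilon>
      \<le> (\<Sum>j = 1..J. P j * val A r c (p j))"
    by (simp add: sum_subtractf)
  have "val A r c (p j) \<le> val A r c (m j)" if j: "j \<in> {1..J}" for j
    using assms j P_pos[OF j] m_in_unit_cube[OF j]
    by (intro worst_belief_val_le[where \<rho> = "\<epsilon> / P j"]) auto
  then show "(\<Sum>j = 1..J. P j * val A r c (p j)) \<le> (\<Sum>j = 1..J. P j * val A r c (m j))"
    using P_pos by (intro sum_mono mult_left_mono) (auto intro: less_imp_le)
qed

end

theorem proposition3:
  fixes M :: "'a measure" and SX :: "'x measure"
    and X :: "'a \<Rightarrow> 'x" and Y :: "'a \<Rightarrow> real ^ 'd" and f :: "'x \<Rightarrow> real ^ 'd"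
    and A :: "'b set" and r :: "'b \<Rightarrow> real ^ 'd" and c :: "'b \<Rightarrow> real"
    and B :: "nat \<Rightarrow> (real ^ 'd) set" and J :: nat and \<epsilon> :: real
  assumes "prob_space M"
    and "X \<in> measurable M SX"
    and "Y \<in> borel_measurable M" and "\<forall>\<omega> \<in> space M. Y \<omega> \<in> unit_cube"
    and "f \<in> borel_measurable SX" and "\<forall>x \<in> space SX. f x \<in> unit_cube"
    and "finite A" and "A \<noteq> {}"
    and "\<forall>j \<in> {1..J}. B j \<in> sets borel"
    and "disjoint_family_on B {1..J}"
    and "(\<Union>j \<in> {1..J}. B j) = unit_cube"
    and "\<forall>j \<in> {1..J}. bin_prob M X f (B j) > 0"
    and "\<epsilon> \<ge> 0"
  shows
    "(\<exists>q \<in> Q_set M X f B J \<epsilon>. \<forall>q' \<in> Q_set M X f B J \<epsilon>.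
        exp_val M X f A r c q \<le> exp_val M X f A r c q')
     \<and> (\<Sum>j = 1..J. bin_prob M X f (B j) * val A r c (bin_mean M X f (B j)))
         - real J * lip_const A r * \<epsilon>
       \<le> (INF q \<in> Q_set M X f B J \<epsilon>. exp_val M X f A r c q)
     \<and> (INF q \<in> Q_set M X f B J \<epsilon>. exp_val M X f A r c q)
       \<le> (\<Sum>j = 1..J. bin_prob M X f (B j) * val A r c (bin_mean M X f (B j)))
     \<and> (\<forall>j \<in> {1..J}. worst_beliefs A r c (bin_mean M X f (B j)) (\<epsilon> / bin_prob M X f (B j)) \<noteq> {})
     \<and> (\<forall>p :: nat \<Rightarrow> real ^ 'd.
          (\<forall>j \<in> {1..J}. p j \<in> worst_beliefs A r c (bin_mean M X f (B j)) (\<epsilon> / bin_prob M X f (B j)))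
          \<longrightarrow> (\<exists>qs. qs \<in> borel_measurable borel \<and> (\<forall>j \<in> {1..J}. \<forall>v \<in> B j. qs v = p j))
            \<and> (\<forall>qs. qs \<in> borel_measurable borel \<and> (\<forall>j \<in> {1..J}. \<forall>v \<in> B j. qs v = p j) \<longrightarrow>
                 qs \<in> Q_set M X f B J \<epsilon>
                 \<and> exp_val M X f A r c qs = (INF q \<in> Q_set M X f B J \<epsilon>. exp_val M X f A r c q)
                 \<and> (\<forall>j \<in> {1..J}. \<forall>v \<in> B j. best_resp A r c (qs v) = best_resp A r c (p j))))"
proof -
  interpret binned_forecast M SX X f A r c B J
    using assms(1,2,5-12) by (intro binned_forecast.intro binned_forecast_axioms.intro) auto
  let ?Q = "Q_set M X f B J \<epsilon>" and ?ev = "exp_val M X f A r c"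
  have nonempty: "\<forall>j \<in> {1..J}. worst_beliefs_bin \<epsilon> j \<noteq> {}"
    using worst_beliefs_bin_nonempty[OF assms(13)] by blast
  then obtain p where p: "\<forall>j \<in> {1..J}. p j \<in> worst_beliefs_bin \<epsilon> j"
    using bchoice[of "{1..J}" "\<lambda>j x. x \<in> worst_beliefs_bin \<epsilon> j"] by blast
  have extension: "\<exists>qs. qs \<in> borel_measurable borel \<and> (\<forall>j \<in> {1..J}. \<forall>v \<in> B j. qs v = p' j)"
    for p' :: "nat \<Rightarrow> real ^ 'd"
    using piecewise_constant_borel_function[OF finite_atLeastAtMost bins_disjoint bins_borel] by metis
  then obtain qs where qs: "qs \<in> borel_measurable borel" "\<forall>j \<in> {1..J}. \<forall>v \<in> B j. qs v = p j"
    by blast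
  note minimizer = piecewise_worst_minimizes[OF p qs]
  have "\<exists>q \<in> ?Q. \<forall>q' \<in> ?Q. ?ev q \<le> ?ev q'"
    using minimizer(1,2) by blast
  moreover have "(INF q \<in> ?Q. ?ev q) = (\<Sum>j = 1..J. P j * val A r c (p j))"
    using minimizer(3,4) by simp
  moreover note sum_val_worst_bounds[OF assms(13) p]
  ultimately show ?thesis
    using nonempty extension piecewise_worst_minimizes(1,3) by auto
qed

end
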